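(* Let $F$ be a field of characteristic zero and $A$ a unital associative $F$-algebra with $A=F1\oplus N$ as vector spaces, where $N$ is a nilpotent ideal of index $m$ (i.e., $m$ is least with $N^m=0$). Let $R$ be a Rota–Baxter operator of weight zero on $A$. Then (a) $\mathrm{Im}\,R\subseteq N$; (b) $\mathrm{rb}(A)\le 2m-1$.
   Context: A linear operator $R$ on $A$ is a Rota–Baxter operator of weight $0$ if $R(x)R(y)=R(R(x)y+xR(y))$ for all $x,y\in A$. The RB-index $\mathrm{rb}(A)$ is the least $n\in\mathbb N$ such that $R^n=0$ for every Rota–Baxter operator $R$ of weight zero on $A$ ($\infty$ if no such $n$ exists). *)

theory Defs
  imports Main "HOL-Library.Extended_Nat"
begin

definition unital_algebra :: "('f::field \<Rightarrow> 'a::ring_1 \<Rightarrow> 'a) \<Rightarrow> bool" where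
  "unital_algebra smult \<longleftrightarrow> vector_space smult \<and>
     (\<forall>c x y. smult c (x * y) = smult c x * y \<and> smult c (x * y) = x * smult c y)"

definition alg_ideal :: "('f::field \<Rightarrow> 'a::ring_1 \<Rightarrow> 'a) \<Rightarrow> 'a set \<Rightarrow> bool" where
  "alg_ideal smult N \<longleftrightarrow> module.subspace smult N \<and>
     (\<forall>a\<in>N. \<forall>x. x * a \<in> N \<and> a * x \<in> N)"

text \<open>N^k = 0, i.e. every product of k elements of N vanishes.\<close>
definition power_zero :: "'a::ring_1 set \<Rightarrow> nat \<Rightarrow> bool" where
  "power_zero N k \<longleftrightarrow> (\<forall>xs. length xs = k \<and> set xs \<subseteq> N \<longrightarrow> prod_list xs = 0)"

definition nilpotent_index :: "'a::ring_1 set \<Rightarrow> nat \<Rightarrow> bool" where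
  "nilpotent_index N m \<longleftrightarrow> power_zero N m \<and> (\<forall>k<m. \<not> power_zero N k)"

definition rota_baxter0 :: "('f::field \<Rightarrow> 'a::ring_1 \<Rightarrow> 'a) \<Rightarrow> ('a \<Rightarrow> 'a) \<Rightarrow> bool" where
  "rota_baxter0 smult R \<longleftrightarrow> Vector_Spaces.linear smult smult R \<and>
     (\<forall>x y. R x * R y = R (R x * y + x * R y))"

definition rb_index :: "('f::field \<Rightarrow> 'a::ring_1 \<Rightarrow> 'a) \<Rightarrow> enat" where
  "rb_index smult =
     (if \<exists>n. \<forall>R. rota_baxter0 smult R \<longrightarrow> (R ^^ n) = (\<lambda>_. 0)
      then enat (LEAST n. \<forall>R. rota_baxter0 smult R \<longrightarrow> (R ^^ n) = (\<lambda>_. 0))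
      else \<infinity>)"

end

theory Submission
  imports Defs
begin

text \<open>Write \<open>R p = c + n\<close> with \<open>c\<close> a scalar and \<open>n \<in> N\<close>. If \<open>R (v p)\<close> and \<open>R (p v)\<close>
  lie in \<open>N\<close> for all \<open>v \<in> N\<close>, comparing scalar parts in \<open>R p * R p = R (R p * p + p * R p)\<close>
  gives \<open>c\<^sup>2 = 2 c\<^sup>2\<close>, so \<open>R p \<in> N\<close>. Since \<open>R\<close> kills \<open>N\<^sup>m\<close>, a descending induction on the
  length of products of elements of \<open>N\<close> gives \<open>R N \<subseteq> N\<close>, hence \<open>R 1 \<in> N\<close> and \<open>R A \<subseteq> N\<close>.

  For the bound, the Rota--Baxter identity with \<open>x = 1\<close> gives by induction
  \<open>R 1 * R\<^sup>k y - R\<^sup>k (R 1 * y) = k * R\<^sup>k\<^sup>+\<^sup>1 y\<close>. In characteristic zero we may divide by \<open>k\<close>, so each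
  application of \<open>R\<close> can be traded for one more factor \<open>R 1\<close> on the left or on the right
  of a shorter iterate. Everything in sight lies in \<open>N\<close> and products of \<open>m\<close> elements of \<open>N\<close>
  vanish, whence \<open>R\<^sup>2\<^sup>m\<^sup>-\<^sup>1 = 0\<close>.\<close>

lemma power_zero_pos: "power_zero S m \<Longrightarrow> 0 < m"
  unfolding power_zero_def by (cases m) auto

lemma power_zero_mono: "S \<subseteq> T \<Longrightarrow> power_zero T m \<Longrightarrow> power_zero S m"
  unfolding power_zero_def by blast

lemma power_zero_prod_list:
  assumes "power_zero S m" "m \<le> length xs" "set xs \<subseteq> S"
  shows "prod_list xs = 0"
proof -
  have "prod_list (take m xs) = 0"
    using assms unfolding power_zero_def by (metis length_take min.absorb2 order.trans set_take_subset)
  then show ?thesis by (metis append_take_drop_id mult_zero_left prod_list.append)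
qed

lemma power_zero_power: "power_zero S m \<Longrightarrow> a \<in> S \<Longrightarrow> m \<le> j \<Longrightarrow> a ^ j = 0"
  using power_zero_prod_list[of S m "replicate j a"] by (simp add: set_replicate_conv_if)

lemma power_zero_power_mult:
  "power_zero S m \<Longrightarrow> a \<in> S \<Longrightarrow> b \<in> S \<Longrightarrow> m \<le> Suc i \<Longrightarrow> a ^ i * b = 0"
  using power_zero_prod_list[of S m "replicate i a @ [b]"] by (simp add: set_replicate_conv_if)

lemma rb_index_le:
  assumes "\<And>R. rota_baxter0 smult R \<Longrightarrow> R ^^ n = (\<lambda>_. 0)"
  shows "rb_index smult \<le> enat n"
proof -
  let ?P = "\<lambda>n. \<forall>R. rota_baxter0 smult R \<longrightarrow> R ^^ n = (\<lambda>_. 0)"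
  have "?P n" using assms by blast
  then show ?thesis unfolding rb_index_def using Least_le[of ?P n] by auto
qed

locale unital_alg =
  fixes smult :: "'f::field \<Rightarrow> 'a::ring_1 \<Rightarrow> 'a"
  assumes unital_algebra: "unital_algebra smult"
begin

sublocale vector_space smult
  using unital_algebra unfolding unital_algebra_def by blast

lemma scale_mult_left: "smult c (x * y) = smult c x * y"
  and scale_mult_right: "smult c (x * y) = x * smult c y"
  using unital_algebra unfolding unital_algebra_def by blast+

lemma scale_one_mult: "smult c 1 * x = smult c x"
  using scale_mult_left[of c 1 x] by simp

lemma mult_scale_one: "x * smult c 1 = smult c x"
  using scale_mult_right[of c x 1] by simp

end

locale rota_baxter = unital_alg +
  fixes R
  assumes rota_baxter0: "rota_baxter0 smult R"
begin

lemma R_add: "R (x + y) = R x + R y"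
  and R_scale: "R (smult c x) = smult c (R x)"
  and R_mult: "R x * R y = R (R x * y + x * R y)"
  using rota_baxter0 unfolding rota_baxter0_def Vector_Spaces.linear_iff by blast+

lemma R_zero: "R 0 = 0"
  using R_scale[of 0 0] by simp

lemma R_diff: "R (x - y) = R x - R y"
  using R_add[of "x - y" y] by (simp add: eq_diff_eq)

lemma R_one_mult: "R 1 * R y = R (R 1 * y) + R (R y)"
  using R_mult[of 1 y] by (simp add: R_add)

lemma R_one_commutator_iter:
  "R 1 * (R ^^ Suc n) y - (R ^^ Suc n) (R 1 * y) = smult (of_nat (Suc n)) ((R ^^ Suc (Suc n)) y)"
proof (induction n)
  case 0
  then show ?case using R_one_mult[of y] by simp
next
  case (Suc n)
  let ?z = "(R ^^ Suc n) y"
  have "R 1 * (R ^^ Suc (Suc n)) y - (R ^^ Suc (Suc n)) (R 1 * y)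
      = R (R 1 * ?z - (R ^^ Suc n) (R 1 * y)) + R (R ?z)"
    using R_one_mult[of ?z] by (simp add: R_diff)
  also have "\<dots> = smult (of_nat (Suc n)) ((R ^^ Suc (Suc (Suc n))) y) + (R ^^ Suc (Suc (Suc n))) y"
    using Suc.IH by (simp add: R_scale)
  also have "\<dots> = smult (of_nat (Suc (Suc n))) ((R ^^ Suc (Suc (Suc n))) y)"
    unfolding of_nat_Suc[of "Suc n"] scale_left_distrib scale_one by (rule add.commute)
  finally show ?case .
qed

end

locale rota_baxter_char_0 = rota_baxter smult R
  for smult :: "'f::field_char_0 \<Rightarrow> 'a::ring_1 \<Rightarrow> 'a" and R
begin

lemma R_one_power_iter_vanish:
  assumes nil: "power_zero (range R) m" and "2 * m - 1 \<le> i + j + Suc n"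
  shows "R 1 ^ i * (R ^^ Suc n) (R 1 ^ j * x) = 0"
  using assms(2)
proof (induction n arbitrary: i j)
  case 0
  show ?case
  proof (cases "m \<le> j")
    case True
    then show ?thesis using power_zero_power[OF nil] by (simp add: R_zero)
  next
    case False
    then show ?thesis using 0 by (intro power_zero_power_mult[OF nil]) auto
  qed
next
  case (Suc n)
  let ?w = "R 1 ^ i * (R ^^ Suc (Suc n)) (R 1 ^ j * x)"
  have left: "R 1 ^ Suc i * (R ^^ Suc n) (R 1 ^ j * x) = 0"
    and right: "R 1 ^ i * (R ^^ Suc n) (R 1 ^ Suc j * x) = 0"
    by (rule Suc.IH; use Suc.prems in simp)+
  have "smult (of_nat (Suc n)) ?w
      = R 1 ^ i * (R 1 * (R ^^ Suc n) (R 1 ^ j * x) - (R ^^ Suc n) (R 1 * (R 1 ^ j * x)))"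
    by (simp only: scale_mult_right R_one_commutator_iter)
  also have "\<dots> = R 1 ^ Suc i * (R ^^ Suc n) (R 1 ^ j * x) - R 1 ^ i * (R ^^ Suc n) (R 1 ^ Suc j * x)"
    by (metis right_diff_distrib mult.assoc power_Suc power_Suc2)
  finally have "smult (of_nat (Suc n)) ?w = 0"
    by (simp only: left right diff_self)
  moreover have "(of_nat (Suc n) :: 'f) \<noteq> 0"
    by (rule of_nat_neq_0)
  ultimately show "?w = 0"
    by simp
qed

lemma R_funpow_eq_zero:
  assumes "power_zero (range R) m"
  shows "R ^^ (2 * m - 1) = (\<lambda>_. 0)"
proof
  fix x
  have "2 * m - 1 = Suc (2 * m - 2)"
    using power_zero_pos[OF assms] by linarith
  then show "(R ^^ (2 * m - 1)) x = 0"
    using R_one_power_iter_vanish[OF assms, of 0 0 "2 * m - 2" x] by simp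
qed

end

locale augmented_algebra = unital_alg +
  fixes N
  assumes ideal: "alg_ideal smult N"
    and decomposition: "\<forall>a. \<exists>!(c, n). n \<in> N \<and> a = smult c 1 + n"
begin

lemma ideal_zero: "0 \<in> N"
  and ideal_add: "x \<in> N \<Longrightarrow> y \<in> N \<Longrightarrow> x + y \<in> N"
  and ideal_scale: "x \<in> N \<Longrightarrow> smult c x \<in> N"
  and ideal_mult_left: "x \<in> N \<Longrightarrow> y * x \<in> N"
  using ideal unfolding alg_ideal_def subspace_def by blast+

lemma decompose: obtains c n where "n \<in> N" "a = smult c 1 + n"
  using decomposition by blast

lemma scalar_part_unique:
  assumes "n \<in> N" "n' \<in> N" "smult c 1 + n = smult c' 1 + n'"
  shows "c = c'"
  using decomposition[rule_format, of "smult c 1 + n"] assms by blast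

end

locale rota_baxter_augmented = rota_baxter + augmented_algebra
begin

lemma R_mem_ideal_if_products:
  assumes left: "\<And>v. v \<in> N \<Longrightarrow> R (v * p) \<in> N" and right: "\<And>v. v \<in> N \<Longrightarrow> R (p * v) \<in> N"
  shows "R p \<in> N"
proof -
  obtain c n where n: "n \<in> N" and Rp: "R p = smult c 1 + n" by (rule decompose)
  have "R p * R p = smult (c * c) 1 + (smult c n + smult c n + n * n)"
    unfolding Rp by (simp add: distrib_left distrib_right scale_one_mult mult_scale_one
        add.assoc scale_right_distrib)
  moreover have "R (R p * p + p * R p) = smult (c * c + c * c) 1 + (smult c n + smult c n + (R (n * p) + R (p * n)))"
  proof -
    have "R p * p + p * R p = smult c p + smult c p + (n * p + p * n)"
      unfolding Rp by (simp add: distrib_left distrib_right scale_one_mult mult_scale_one algebra_simps)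
    then have "R (R p * p + p * R p) = smult c (R p) + smult c (R p) + (R (n * p) + R (p * n))"
      by (simp only: R_add R_scale)
    also have "\<dots> = smult (c * c) 1 + smult (c * c) 1 + (smult c n + smult c n + (R (n * p) + R (p * n)))"
      unfolding Rp by (simp add: scale_right_distrib algebra_simps)
    finally show ?thesis
      by (simp only: scale_left_distrib)
  qed
  ultimately have "smult (c * c) 1 + (smult c n + smult c n + n * n)
      = smult (c * c + c * c) 1 + (smult c n + smult c n + (R (n * p) + R (p * n)))"
    using R_mult[of p p] by (simp only:)
  moreover have "smult c n + smult c n + n * n \<in> N"
    using n by (intro ideal_add ideal_scale ideal_mult_left)
  moreover have "smult c n + smult c n + (R (n * p) + R (p * n)) \<in> N"
    using n left right by (intro ideal_add ideal_scale)
  ultimately have "c * c = c * c + c * c" by (intro scalar_part_unique)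
  then have "c * c = 0" by (metis add_cancel_left_right)
  then have "c = 0" by simp
  then show ?thesis using n Rp by simp
qed

lemma R_prod_list_mem_ideal:
  assumes "power_zero N m" "set xs \<subseteq> N" "xs \<noteq> []" "m \<le> length xs + k"
  shows "R (prod_list xs) \<in> N"
  using assms(2-)
proof (induction k arbitrary: xs)
  case 0
  then show ?case
    using power_zero_prod_list[OF assms(1)] by (simp add: R_zero ideal_zero)
next
  case (Suc k)
  show ?case
  proof (rule R_mem_ideal_if_products)
    fix v assume "v \<in> N"
    then show "R (v * prod_list xs) \<in> N" "R (prod_list xs * v) \<in> N"
      using Suc.IH[of "v # xs"] Suc.IH[of "xs @ [v]"] Suc.prems by simp_all
  qed
qed

lemma R_ideal: "power_zero N m \<Longrightarrow> x \<in> N \<Longrightarrow> R x \<in> N"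
  using R_prod_list_mem_ideal[of m "[x]" m] by simp

lemma range_R_subset_ideal:
  assumes "power_zero N m"
  shows "range R \<subseteq> N"
proof
  fix y assume "y \<in> range R"
  then obtain x where y: "y = R x" by blast
  obtain c n where n: "n \<in> N" and x: "x = smult c 1 + n" by (rule decompose)
  have "R 1 \<in> N"
    by (rule R_mem_ideal_if_products) (simp_all add: R_ideal[OF assms])
  moreover have "R x = smult c (R 1) + R n"
    unfolding x by (simp only: R_add R_scale)
  ultimately show "y \<in> N"
    unfolding y using R_ideal[OF assms n] by (simp only: ideal_add ideal_scale)
qed

end

theorem theorem14:
  fixes smult :: "'f::field_char_0 \<Rightarrow> 'a::ring_1 \<Rightarrow> 'a"
    and N :: "'a set" and m :: nat and R :: "'a \<Rightarrow> 'a"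
  assumes "unital_algebra smult"
    and "alg_ideal smult N"
    and "\<forall>a. \<exists>!(c, n). n \<in> N \<and> a = smult c 1 + n"
    and "nilpotent_index N m"
    and "rota_baxter0 smult R"
  shows "range R \<subseteq> N \<and> rb_index smult \<le> enat (2 * m - 1)"
proof -
  have nilpotent: "power_zero N m"
    using assms(4) unfolding nilpotent_index_def by blast
  have range_subset: "range R' \<subseteq> N" if "rota_baxter0 smult R'" for R'
  proof -
    interpret rota_baxter_augmented smult R' N
      using assms(1-3) that by unfold_locales
    show ?thesis using range_R_subset_ideal[OF nilpotent] .
  qed
  have "rb_index smult \<le> enat (2 * m - 1)"
  proof (rule rb_index_le)
    fix R' assume R': "rota_baxter0 smult R'"
    interpret rota_baxter_char_0 smult R'
      using assms(1) R' by unfold_locales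
    show "R' ^^ (2 * m - 1) = (\<lambda>_. 0)"
      using R_funpow_eq_zero power_zero_mono[OF range_subset[OF R'] nilpotent] by blast
  qed
  then show ?thesis using range_subset[OF assms(5)] by blast
qed

end
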